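(* Let $n\ge1$ and let $\mathcal{I}$ be an interval hypergraph on $[n]$ containing all singletons. The map $\pi\mapsto \mathrm{Or}_\pi$ from the weak order on permutations of $[n]$ to $P_{\mathcal{I}}$ is a meet (resp. join) semilattice morphism if and only if $\mathcal{I}$ is closed under initial (resp. final) subintervals, i.e. $[i,k]\in\mathcal{I}$ implies $[i,j]\in\mathcal{I}$ (resp. $[j,k]\in\mathcal{I}$) for all $1\le i<j<k\le n$.
   Context: An interval hypergraph $\mathcal{I}$ on $[n]$ is a collection of intervals $[i,j]=\{i,\dots,j\}$ of $[n]$, by convention containing all singletons. An orientation is a map $O:\mathcal{I}\to[n]$ with $O(I)\in I$; it is acyclic if there are no $H_1,\dots,H_k\in\mathcal{I}$, $k\ge2$, with $O(H_{i+1})\in H_i\setminus\{O(H_i)\}$ for $i\in[k-1]$ and $O(H_1)\in H_k\setminus\{O(H_k)\}$. Orientations $O\ne O'$ are related by an increasing flip (from $O$ to $O'$) if there exist $1\le i<j\le n$ such that for all $H$: if $O(H)\ne O'(H)$ then $O(H)=i$, $O'(H)=j$; and if $\{i,j\}\subseteq H$ then $O(H)=i\iff O'(H)=j$. $P_{\mathcal{I}}$ is the transitive closure of the increasing flip relation on acyclic orientations. For a permutation $\pi$ of $[n]$ (in one-line notation), $\mathrm{Or}_\pi$ is the acyclic orientation with $\mathrm{Or}_\pi(I)=\pi(\min\{j:\pi(j)\in I\})$; this map is a surjective poset morphism from the weak order to $P_{\mathcal{I}}$. A map $\phi$ between meet semilattices is a meet semilattice morphism if $\phi(a\wedge b)=\phi(a)\wedge\phi(b)$;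 equivalently, each fiber of $\phi$ is order convex and has a unique minimal element, and the map sending $a$ to the minimal element of its fiber is order preserving. Join semilattice morphisms are defined dually. *)

theory Defs
  imports "HOL-Combinatorics.Permutations"
begin

definition interval_hypergraph :: "nat \<Rightarrow> nat set set \<Rightarrow> bool" where
  "interval_hypergraph n I \<longleftrightarrow>
     I \<subseteq> {{i..j} | i j. 1 \<le> i \<and> i \<le> j \<and> j \<le> n} \<and>
     (\<forall>i\<in>{1..n}. {i} \<in> I)"

text \<open>Orientations: maps R with R H \<in> H for H \<in> I; made extensional by R H = 0 outside I.\<close>

definition orientation :: "nat set set \<Rightarrow> (nat set \<Rightarrow> nat) \<Rightarrow> bool" where
  "orientation I R \<longleftrightarrow> (\<forall>H\<in>I. R H \<in> H) \<and> (\<forall>H. H \<notin> I \<longrightarrow> R H = 0)"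

definition acyclic_orientation :: "nat set set \<Rightarrow> (nat set \<Rightarrow> nat) \<Rightarrow> bool" where
  "acyclic_orientation I R \<longleftrightarrow> orientation I R \<and>
     \<not> (\<exists>(k::nat) (hs :: nat \<Rightarrow> nat set). k \<ge> 2 \<and> (\<forall>i<k. hs i \<in> I) \<and>
          (\<forall>i<k. R (hs ((i + 1) mod k)) \<in> hs i - {R (hs i)}))"

definition increasing_flip :: "nat \<Rightarrow> nat set set \<Rightarrow> (nat set \<Rightarrow> nat) \<Rightarrow> (nat set \<Rightarrow> nat) \<Rightarrow> bool" where
  "increasing_flip n I R Q \<longleftrightarrow> R \<noteq> Q \<and>
     (\<exists>i j. 1 \<le> i \<and> i < j \<and> j \<le> n \<and>
        (\<forall>H\<in>I. (R H \<noteq> Q H \<longrightarrow> R H = i \<and> Q H = j) \<and>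
                ({i, j} \<subseteq> H \<longrightarrow> (R H = i \<longleftrightarrow> Q H = j))))"

definition flip_rel :: "nat \<Rightarrow> nat set set \<Rightarrow> ((nat set \<Rightarrow> nat) \<times> (nat set \<Rightarrow> nat)) set" where
  "flip_rel n I = {(R, Q). acyclic_orientation I R \<and> acyclic_orientation I Q \<and> increasing_flip n I R Q}"

definition P_le :: "nat \<Rightarrow> nat set set \<Rightarrow> (nat set \<Rightarrow> nat) \<Rightarrow> (nat set \<Rightarrow> nat) \<Rightarrow> bool" where
  "P_le n I R Q \<longleftrightarrow> acyclic_orientation I R \<and> acyclic_orientation I Q \<and> (R, Q) \<in> (flip_rel n I)\<^sup>*"

definition inversions :: "(nat \<Rightarrow> nat) \<Rightarrow> (nat \<times> nat) set" where
  "inversions \<pi> = {(a, b). a < b \<and> inv \<pi> a > inv \<pi> b}"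

definition weak_le :: "nat \<Rightarrow> (nat \<Rightarrow> nat) \<Rightarrow> (nat \<Rightarrow> nat) \<Rightarrow> bool" where
  "weak_le n \<pi> \<sigma> \<longleftrightarrow> \<pi> permutes {1..n} \<and> \<sigma> permutes {1..n} \<and> inversions \<pi> \<subseteq> inversions \<sigma>"

definition Or_perm :: "nat set set \<Rightarrow> (nat \<Rightarrow> nat) \<Rightarrow> (nat set \<Rightarrow> nat)" where
  "Or_perm I \<pi> = (\<lambda>H. if H \<in> I then \<pi> (LEAST j. \<pi> j \<in> H) else 0)"

definition is_meet :: "'a set \<Rightarrow> ('a \<Rightarrow> 'a \<Rightarrow> bool) \<Rightarrow> 'a \<Rightarrow> 'a \<Rightarrow> 'a \<Rightarrow> bool" where
  "is_meet C le a b m \<longleftrightarrow> m \<in> C \<and> le m a \<and> le m b \<and> (\<forall>x\<in>C. le x a \<and> le x b \<longrightarrow> le x m)"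

definition is_join :: "'a set \<Rightarrow> ('a \<Rightarrow> 'a \<Rightarrow> bool) \<Rightarrow> 'a \<Rightarrow> 'a \<Rightarrow> 'a \<Rightarrow> bool" where
  "is_join C le a b m \<longleftrightarrow> m \<in> C \<and> le a m \<and> le b m \<and> (\<forall>x\<in>C. le a x \<and> le b x \<longrightarrow> le m x)"

text \<open>phi(a meet b) is the meet of phi a and phi b (in particular that meet exists).\<close>

definition meet_morphism :: "'a set \<Rightarrow> ('a \<Rightarrow> 'a \<Rightarrow> bool) \<Rightarrow> 'b set \<Rightarrow> ('b \<Rightarrow> 'b \<Rightarrow> bool) \<Rightarrow> ('a \<Rightarrow> 'b) \<Rightarrow> bool" where
  "meet_morphism A leA B leB \<phi> \<longleftrightarrow>
     (\<forall>a\<in>A. \<forall>b\<in>A. \<forall>m. is_meet A leA a b m \<longrightarrow> is_meet B leB (\<phi> a) (\<phi> b) (\<phi> m))"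

definition join_morphism :: "'a set \<Rightarrow> ('a \<Rightarrow> 'a \<Rightarrow> bool) \<Rightarrow> 'b set \<Rightarrow> ('b \<Rightarrow> 'b \<Rightarrow> bool) \<Rightarrow> ('a \<Rightarrow> 'b) \<Rightarrow> bool" where
  "join_morphism A leA B leB \<phi> \<longleftrightarrow>
     (\<forall>a\<in>A. \<forall>b\<in>A. \<forall>m. is_join A leA a b m \<longrightarrow> is_join B leB (\<phi> a) (\<phi> b) (\<phi> m))"

definition closed_initial :: "nat \<Rightarrow> nat set set \<Rightarrow> bool" where
  "closed_initial n I \<longleftrightarrow> (\<forall>i j k. 1 \<le> i \<and> i < j \<and> j < k \<and> k \<le> n \<and> {i..k} \<in> I \<longrightarrow> {i..j} \<in> I)"

definition closed_final :: "nat \<Rightarrow> nat set set \<Rightarrow> bool" where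
  "closed_final n I \<longleftrightarrow> (\<forall>i j k. 1 \<le> i \<and> i < j \<and> j < k \<and> k \<le> n \<and> {i..k} \<in> I \<longrightarrow> {j..k} \<in> I)"

end

theory Submission
  imports Defs
begin

text \<open>
  The arcs of an orientation X lead from X H to the other elements of H; X is acyclic exactly
  when this relation is, and Or_pi is the unique orientation whose arcs go forward in the
  one-line notation of pi. Or is monotone because an adjacent transposition adding the
  inversion (a, b) either fixes Or_pi or is an increasing flip from a to b.

  If I is closed under initial subintervals, descending arcs (from c to some x < c) only
  accumulate along increasing flips. For acyclic X, put b before a < b exactly when b reaches a
  by descending arcs: this is a linear order extending the arcs of X, and the permutation mu
  listing it has Or_mu = X and lies below every pi with X \<le> Or_pi. For a lower bound X of
  Or_a and Or_b this gives mu \<le> a \<and> b, hence X \<le> Or_(a \<and> b).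

  If [i,k] \<in> I but [i,j] \<notin> I with k minimal, let m, pi, sigma list i j k, j i k and k i j
  consecutively after 1, ..., i - 1. Then m = pi \<and> sigma, while rho, which lists k j i there,
  lies above pi and, by minimality of k, has the same orientation as sigma. Hence Or_pi \<le> Or_sigma, so the meet of
  Or_pi and Or_sigma is Or_pi, which differs from Or_m on [i,k].

  The reflection v \<mapsto> n + 1 - v reverses the weak order and P_I and exchanges initial and final
  subintervals, so the join statement for I is the meet statement for the reflected hypergraph.
\<close>

section \<open>Orientations induced by permutations\<close>

lemma interval_hypergraph_edge:
  assumes "interval_hypergraph n I" "H \<in> I"
  obtains l r where "H = {l..r}" "1 \<le> l" "l \<le> r" "r \<le> n"
  using assms unfolding interval_hypergraph_def by blast

lemma interval_hypergraph_edge_subset: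
  "interval_hypergraph n I \<Longrightarrow> H \<in> I \<Longrightarrow> H \<subseteq> {1..n}"
  by (erule (1) interval_hypergraph_edge) auto

lemma interval_hypergraph_edge_nonempty:
  "interval_hypergraph n I \<Longrightarrow> H \<in> I \<Longrightarrow> H \<noteq> {}"
  by (erule (1) interval_hypergraph_edge) auto

lemma interval_hypergraph_edge_convex:
  "interval_hypergraph n I \<Longrightarrow> H \<in> I \<Longrightarrow> u \<in> H \<Longrightarrow> w \<in> H \<Longrightarrow> u \<le> a \<Longrightarrow> a \<le> w \<Longrightarrow> a \<in> H"
  by (erule (1) interval_hypergraph_edge) auto

definition is_min_by :: "('a \<Rightarrow> nat) \<Rightarrow> 'a set \<Rightarrow> 'a \<Rightarrow> bool" where
  "is_min_by p H v \<longleftrightarrow> v \<in> H \<and> (\<forall>w\<in>H. w \<noteq> v \<longrightarrow> p v < p w)"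

lemma is_min_by_unique: "is_min_by p H v \<Longrightarrow> is_min_by p H w \<Longrightarrow> v = w"
  unfolding is_min_by_def by (metis less_asym)

lemma is_min_by_cong:
  assumes "\<forall>u\<in>H. \<forall>w\<in>H. p u < p w \<longleftrightarrow> q u < q w"
  shows "is_min_by p H v \<longleftrightarrow> is_min_by q H v"
  using assms unfolding is_min_by_def by blast

lemma is_min_by_inv_Least:
  assumes "bij \<pi>" "H \<noteq> {}"
  shows "is_min_by (inv \<pi>) H (\<pi> (LEAST j. \<pi> j \<in> H))"
proof -
  obtain w0 where "w0 \<in> H" using assms(2) by blast
  then have ex: "\<pi> (inv \<pi> w0) \<in> H" using assms(1) by (simp add: bij_is_surj surj_f_inv_f)
  let ?L = "LEAST j. \<pi> j \<in> H"
  have "\<pi> ?L \<in> H" using LeastI[of "\<lambda>j. \<pi> j \<in> H", OF ex] .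
  moreover have "?L \<le> inv \<pi> w" if "w \<in> H" for w
    using that assms(1) by (intro Least_le) (simp add: bij_is_surj surj_f_inv_f)
  moreover have "inv \<pi> (\<pi> ?L) = ?L" using assms(1) by (simp add: bij_is_inj)
  moreover have "inv \<pi> a \<noteq> inv \<pi> b" if "a \<noteq> b" for a b
    using that assms(1) by (metis bij_inv_eq_iff)
  ultimately show ?thesis unfolding is_min_by_def by (metis le_neq_implies_less)
qed

lemma Or_perm_eq_iff:
  assumes "interval_hypergraph n I" "\<pi> permutes {1..n}" "H \<in> I"
  shows "Or_perm I \<pi> H = v \<longleftrightarrow> is_min_by (inv \<pi>) H v"
  using is_min_by_inv_Least[OF permutes_bij[OF assms(2)] interval_hypergraph_edge_nonempty[OF assms(1,3)]]
    is_min_by_unique assms(3) unfolding Or_perm_def by auto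

lemma Or_perm_is_min_by:
  "interval_hypergraph n I \<Longrightarrow> \<pi> permutes {1..n} \<Longrightarrow> H \<in> I \<Longrightarrow> is_min_by (inv \<pi>) H (Or_perm I \<pi> H)"
  using Or_perm_eq_iff by blast

lemma Or_perm_outside: "H \<notin> I \<Longrightarrow> Or_perm I \<pi> H = 0"
  by (simp add: Or_perm_def)

lemma Or_perm_orientation:
  "interval_hypergraph n I \<Longrightarrow> \<pi> permutes {1..n} \<Longrightarrow> orientation I (Or_perm I \<pi>)"
  unfolding orientation_def using Or_perm_is_min_by Or_perm_outside by (metis is_min_by_def)

definition arcs :: "nat set set \<Rightarrow> (nat set \<Rightarrow> nat) \<Rightarrow> (nat \<times> nat) set" where
  "arcs I X = {(c, x). \<exists>H\<in>I. X H = c \<and> x \<in> H \<and> x \<noteq> c}"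

lemma arcsI: "H \<in> I \<Longrightarrow> x \<in> H \<Longrightarrow> x \<noteq> X H \<Longrightarrow> (X H, x) \<in> arcs I X"
  unfolding arcs_def by blast

lemma not_acyclic_arcs_if_cycle:
  fixes k :: nat
  assumes k: "k \<ge> 2" and hs: "\<forall>i<k. hs i \<in> I"
    and cyc: "\<forall>i<k. X (hs ((i + 1) mod k)) \<in> hs i - {X (hs i)}"
  shows "\<not> acyclic (arcs I X)"
proof -
  define f where "f i = X (hs (i mod k))" for i
  have "(f i, f (Suc i)) \<in> arcs I X" for i
  proof -
    have i: "i mod k < k" using k by simp
    have "Suc i mod k = (i mod k + 1) mod k" by (simp add: mod_Suc_eq)
    then have "f (Suc i) \<in> hs (i mod k) - {f i}" using cyc i unfolding f_def by simp
    then show ?thesis using arcsI[of "hs (i mod k)" I "f (Suc i)" X] hs i unfolding f_def by simp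
  qed
  then have "(f 0, f k) \<in> arcs I X ^^ k" unfolding relpow_fun_conv by blast
  moreover have "f k = f 0" by (simp add: f_def)
  ultimately have "(f 0, f 0) \<in> (arcs I X)\<^sup>+"
    unfolding trancl_power using k by (intro exI[of _ k]) auto
  then show ?thesis unfolding acyclic_def by blast
qed

lemma cycle_if_not_acyclic_arcs:
  assumes "\<not> acyclic (arcs I X)"
  shows "\<exists>(k::nat) hs. k \<ge> 2 \<and> (\<forall>i<k. hs i \<in> I) \<and> (\<forall>i<k. X (hs ((i + 1) mod k)) \<in> hs i - {X (hs i)})"
proof -
  obtain v m where m: "m > 0" "(v, v) \<in> arcs I X ^^ m"
    using assms unfolding acyclic_def trancl_power by blast
  then obtain f where f: "f 0 = v" "f m = v" "\<forall>i<m. (f i, f (Suc i)) \<in> arcs I X"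
    unfolding relpow_fun_conv by blast
  define P where "P t H \<longleftrightarrow> H \<in> I \<and> X H = f t \<and> f (Suc t) \<in> H - {f t}" for t H
  define hs where "hs t = (SOME H. P t H)" for t
  have hs: "P t (hs t)" if "t < m" for t
  proof -
    have "\<exists>H. P t H" using f(3) that unfolding P_def arcs_def by blast
    then show ?thesis unfolding hs_def by (rule someI_ex)
  qed
  have "m \<noteq> 1" using hs[of 0] f unfolding P_def by auto
  then have "m \<ge> 2" using m by simp
  moreover have "X (hs ((t + 1) mod m)) \<in> hs t - {X (hs t)}" if t: "t < m" for t
  proof (cases "t + 1 < m")
    case True
    then show ?thesis using hs[OF t] hs[OF True] unfolding P_def by simp
  next
    case False
    then have "t + 1 = m" using t by simp
    then show ?thesis using hs[OF t] hs[of 0] f \<open>m > 0\<close> unfolding P_def by simp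
  qed
  moreover have "\<forall>i<m. hs i \<in> I" using hs unfolding P_def by blast
  ultimately show ?thesis by blast
qed

lemma acyclic_orientation_iff_acyclic_arcs:
  "acyclic_orientation I X \<longleftrightarrow> orientation I X \<and> acyclic (arcs I X)"
  unfolding acyclic_orientation_def using not_acyclic_arcs_if_cycle cycle_if_not_acyclic_arcs by blast

lemma arcs_Or_perm:
  assumes "interval_hypergraph n I" "\<pi> permutes {1..n}" "(c, x) \<in> arcs I (Or_perm I \<pi>)"
  shows "inv \<pi> c < inv \<pi> x"
  using assms Or_perm_is_min_by unfolding arcs_def is_min_by_def by blast

lemma trancl_arcs_Or_perm:
  assumes "interval_hypergraph n I" "\<pi> permutes {1..n}" "(c, x) \<in> (arcs I (Or_perm I \<pi>))\<^sup>+"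
  shows "inv \<pi> c < inv \<pi> x"
  using assms(3)
proof induction
  case (step y z)
  then show ?case using arcs_Or_perm[OF assms(1,2), of y z] by simp
qed (rule arcs_Or_perm[OF assms(1,2)])

lemma Or_perm_acyclic:
  assumes "interval_hypergraph n I" "\<pi> permutes {1..n}"
  shows "acyclic_orientation I (Or_perm I \<pi>)"
proof -
  have "arcs I (Or_perm I \<pi>) \<subseteq> inv_image less_than (inv \<pi>)"
    using arcs_Or_perm[OF assms] by auto
  then have "acyclic (arcs I (Or_perm I \<pi>))"
    by (rule acyclic_subset[OF wf_acyclic[OF wf_inv_image[OF wf_less_than]]])
  then show ?thesis
    using acyclic_orientation_iff_acyclic_arcs Or_perm_orientation[OF assms] by blast
qed

lemma Or_perm_eq_if_extends_arcs:
  assumes ih: "interval_hypergraph n I" and p: "\<pi> permutes {1..n}" and X: "orientation I X"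
    and ext: "\<And>c x. (c, x) \<in> arcs I X \<Longrightarrow> inv \<pi> c < inv \<pi> x"
  shows "Or_perm I \<pi> = X"
proof
  fix H
  show "Or_perm I \<pi> H = X H"
  proof (cases "H \<in> I")
    case True
    have "is_min_by (inv \<pi>) H (X H)"
      using X True ext arcsI[OF True] unfolding orientation_def is_min_by_def by blast
    then show ?thesis using Or_perm_eq_iff[OF ih p True] by blast
  next
    case False
    then show ?thesis using X Or_perm_outside unfolding orientation_def by metis
  qed
qed

section \<open>Monotonicity of Or\<close>

lemma inversions_subset:
  assumes "\<pi> permutes {1..n}"
  shows "inversions \<pi> \<subseteq> {1..n} \<times> {1..n}"
proof
  fix e assume "e \<in> inversions \<pi>"
  then obtain a b where e: "e = (a, b)" and ab: "(a, b) \<in> inversions \<pi>" by (cases e) auto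
  have p: "inv \<pi> permutes {1..n}" using permutes_inv[OF assms] .
  have lt: "a < b" "inv \<pi> b < inv \<pi> a" using ab unfolding inversions_def by auto
  have img: "x \<in> {1..n} \<Longrightarrow> inv \<pi> x \<le> n" and out: "x \<notin> {1..n} \<Longrightarrow> inv \<pi> x = x" for x
    using permutes_in_image[OF p, of x] permutes_not_in[OF p, of x] by auto
  have b: "b \<in> {1..n}"
  proof (rule ccontr)
    assume "b \<notin> {1..n}"
    then have "n < b" "inv \<pi> b = b" using lt(1) out by auto
    then show False using lt img[of a] out[of a] by (cases "a \<in> {1..n}") auto
  qed
  have "a \<in> {1..n}"
  proof (rule ccontr)
    assume "a \<notin> {1..n}"
    then have "inv \<pi> a = 0" using b lt(1) out by auto
    then show False using lt(2) by simp
  qed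
  then show "e \<in> {1..n} \<times> {1..n}" using b e by simp
qed

lemma finite_inversions: "\<pi> permutes {1..n} \<Longrightarrow> finite (inversions \<pi>)"
  using inversions_subset finite_subset by blast

lemma inv_less_iff_inversions:
  assumes "bij \<pi>" "u \<noteq> w"
  shows "inv \<pi> u < inv \<pi> w \<longleftrightarrow> (if u < w then (u, w) \<notin> inversions \<pi> else (w, u) \<in> inversions \<pi>)"
proof -
  have "inv \<pi> u \<noteq> inv \<pi> w" using assms by (metis bij_inv_eq_iff)
  then show ?thesis using assms(2) unfolding inversions_def by auto
qed

lemma Or_perm_eq_if_inversions_eq:
  assumes ih: "interval_hypergraph n I" and p: "\<pi> permutes {1..n}" and s: "\<sigma> permutes {1..n}"
    and eq: "inversions \<pi> = inversions \<sigma>"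
  shows "Or_perm I \<pi> = Or_perm I \<sigma>"
proof
  fix H
  show "Or_perm I \<pi> H = Or_perm I \<sigma> H"
  proof (cases "H \<in> I")
    case True
    have "\<forall>u\<in>H. \<forall>w\<in>H. inv \<pi> u < inv \<pi> w \<longleftrightarrow> inv \<sigma> u < inv \<sigma> w"
      using inv_less_iff_inversions[OF permutes_bij[OF p]] inv_less_iff_inversions[OF permutes_bij[OF s]] eq
      by (metis less_irrefl)
    then have "is_min_by (inv \<pi>) H v \<longleftrightarrow> is_min_by (inv \<sigma>) H v" for v
      by (rule is_min_by_cong)
    then show ?thesis
      using Or_perm_eq_iff[OF ih p True] Or_perm_eq_iff[OF ih s True] by metis
  qed (simp add: Or_perm_outside)
qed

lemma less_transpose_adjacent_iff:
  fixes p :: "'a \<Rightarrow> nat"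
  assumes inj: "inj_on p S" and S: "a \<in> S" "b \<in> S" "x \<in> S" "y \<in> S"
    and adj: "p b = Suc (p a)" and xy: "{x, y} \<noteq> {a, b}"
  shows "p (transpose a b x) < p (transpose a b y) \<longleftrightarrow> p x < p y"
proof -
  have ne: "p z \<noteq> p a" "p z \<noteq> p b" if "z \<in> S" "z \<noteq> a" "z \<noteq> b" for z
    using inj_onD[OF inj _ that(1)] S that by metis+
  have "a \<noteq> b" using adj by auto
  consider "x = y" | "x \<notin> {a, b}" "y \<notin> {a, b}" | "x \<in> {a, b}" "y \<notin> {a, b}" | "x \<notin> {a, b}" "y \<in> {a, b}"
    using xy \<open>a \<noteq> b\<close> by blast
  then show ?thesis
  proof cases
    case 3
    then show ?thesis using ne[OF S(4)] adj by auto
  next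
    case 4
    then show ?thesis using ne[OF S(3)] adj by (auto simp: less_Suc_eq)
  qed simp_all
qed

lemma is_min_by_transpose:
  fixes p :: "'a \<Rightarrow> nat"
  assumes inj: "inj_on p S" and S: "H \<subseteq> S" "a \<in> S" "b \<in> S"
    and adj: "p b = Suc (p a)" and v: "is_min_by p H v"
  shows "is_min_by (p \<circ> transpose a b) H (if a \<in> H \<and> b \<in> H \<and> v = a then b else v)"
proof (cases "a \<in> H \<and> b \<in> H \<and> v = a")
  case True
  have "p a < p (transpose a b w)" if "w \<in> H" "w \<noteq> b" for w
    using v True that adj unfolding is_min_by_def by (cases "w = a") auto
  then show ?thesis using True unfolding if_P[OF True] is_min_by_def by simp
next
  case False
  have "p (transpose a b v) < p (transpose a b w)" if w: "w \<in> H" "w \<noteq> v" for w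
  proof -
    have "p v < p w" using v w unfolding is_min_by_def by blast
    moreover have "{v, w} \<noteq> {a, b}"
    proof
      assume "{v, w} = {a, b}"
      then have "v = b" "w = a" using False w v unfolding is_min_by_def by (auto simp: doubleton_eq_iff)
      then show False using \<open>p v < p w\<close> adj by simp
    qed
    ultimately show ?thesis
      using less_transpose_adjacent_iff[OF inj S(2,3) _ _ adj] S w v unfolding is_min_by_def by blast
  qed
  then show ?thesis using v unfolding if_not_P[OF False] is_min_by_def by simp
qed

lemma inv_transpose_comp:
  "\<pi> permutes S \<Longrightarrow> inv (transpose a b \<circ> \<pi>) = inv \<pi> \<circ> transpose a b"
  using o_inv_distrib[OF bij_transpose permutes_bij] by simp

lemma inversions_transpose_adjacent:
  assumes p: "\<pi> permutes {1..n}" and "a < b" and adj: "inv \<pi> b = Suc (inv \<pi> a)"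
  shows "inversions (transpose a b \<circ> \<pi>) = insert (a, b) (inversions \<pi>)"
proof -
  have inj: "inj_on (inv \<pi>) UNIV" using permutes_inj[OF permutes_inv[OF p]] .
  have "(x, y) \<in> inversions (transpose a b \<circ> \<pi>) \<longleftrightarrow> (x, y) \<in> insert (a, b) (inversions \<pi>)" for x y
  proof (cases "{x, y} = {a, b}")
    case True
    then show ?thesis using \<open>a < b\<close> adj inv_transpose_comp[OF p]
      unfolding inversions_def by (auto simp: doubleton_eq_iff)
  next
    case False
    then have "{y, x} \<noteq> {a, b}" by (simp add: insert_commute)
    from less_transpose_adjacent_iff[OF inj UNIV_I UNIV_I UNIV_I UNIV_I adj this]
    show ?thesis using False inv_transpose_comp[OF p] unfolding inversions_def by auto
  qed
  then show ?thesis by auto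
qed

lemma Or_perm_transpose_adjacent:
  assumes ih: "interval_hypergraph n I" and p: "\<pi> permutes {1..n}" and H: "H \<in> I"
    and ab: "a \<in> {1..n}" "b \<in> {1..n}" and adj: "inv \<pi> b = Suc (inv \<pi> a)"
  shows "Or_perm I (transpose a b \<circ> \<pi>) H
           = (if a \<in> H \<and> b \<in> H \<and> Or_perm I \<pi> H = a then b else Or_perm I \<pi> H)"
proof -
  have p': "transpose a b \<circ> \<pi> permutes {1..n}" using permutes_compose[OF p permutes_swap_id[OF ab]] .
  have "inj_on (inv \<pi>) UNIV" using permutes_inj[OF permutes_inv[OF p]] .
  from is_min_by_transpose[OF this _ _ _ adj Or_perm_is_min_by[OF ih p H]]
  show ?thesis using Or_perm_eq_iff[OF ih p' H] inv_transpose_comp[OF p] by simp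
qed

lemma Or_perm_transpose_adjacent_flip:
  assumes ih: "interval_hypergraph n I" and p: "\<pi> permutes {1..n}"
    and ab: "a \<in> {1..n}" "b \<in> {1..n}" "a < b" and adj: "inv \<pi> b = Suc (inv \<pi> a)"
  shows "Or_perm I \<pi> = Or_perm I (transpose a b \<circ> \<pi>)
      \<or> increasing_flip n I (Or_perm I \<pi>) (Or_perm I (transpose a b \<circ> \<pi>))"
proof -
  let ?R = "Or_perm I \<pi>" and ?Q = "Or_perm I (transpose a b \<circ> \<pi>)"
  have "(?R H \<noteq> ?Q H \<longrightarrow> ?R H = a \<and> ?Q H = b) \<and> ({a, b} \<subseteq> H \<longrightarrow> (?R H = a \<longleftrightarrow> ?Q H = b))"
    if H: "H \<in> I" for H
  proof -
    have "?R H \<noteq> b" if "a \<in> H"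
      using Or_perm_is_min_by[OF ih p H] that adj unfolding is_min_by_def by force
    then show ?thesis using Or_perm_transpose_adjacent[OF ih p H ab(1,2) adj] by auto
  qed
  then show ?thesis unfolding increasing_flip_def using ab by (intro disjCI conjI exI[of _ a] exI[of _ b]) auto
qed

lemma exists_descent:
  fixes g :: "nat \<Rightarrow> 'a::linorder"
  assumes "lo \<le> hi" "g hi < g lo"
  obtains t where "lo \<le> t" "t < hi" "g (Suc t) < g t"
proof -
  have "\<exists>t. lo \<le> t \<and> t < hi \<and> g (Suc t) < g t"
  proof (rule ccontr)
    assume "\<nexists>t. lo \<le> t \<and> t < hi \<and> g (Suc t) < g t"
    then have nondesc: "g t \<le> g (Suc t)" if "lo \<le> t" "t < hi" for t
      using that by (meson not_le)
    have "g lo \<le> g t" if "lo \<le> t" "t \<le> hi" for t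
      using that
    proof (induction t rule: dec_induct)
      case (step t)
      then show ?case using nondesc[of t] by simp
    qed simp
    then show False using assms by (meson leD order_refl)
  qed
  then show thesis using that by blast
qed

lemma exists_adjacent_inversion:
  assumes p: "\<pi> permutes {1..n}" and s: "\<sigma> permutes {1..n}"
    and sub: "inversions \<pi> \<subseteq> inversions \<sigma>" and ab: "(a, b) \<in> inversions \<sigma> - inversions \<pi>"
  obtains x y where "(x, y) \<in> inversions \<sigma> - inversions \<pi>" "inv \<pi> y = Suc (inv \<pi> x)"
proof -
  have bp: "bij \<pi>" using permutes_bij[OF p] .
  define g where "g t = inv \<sigma> (\<pi> t)" for t
  have "a < b" "inv \<sigma> b < inv \<sigma> a" using ab unfolding inversions_def by auto
  then have "inv \<pi> a < inv \<pi> b" using ab inv_less_iff_inversions[OF bp, of a b] by auto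
  moreover have "g (inv \<pi> b) < g (inv \<pi> a)"
    using \<open>inv \<sigma> b < inv \<sigma> a\<close> permutes_inverses(1)[OF p] unfolding g_def by simp
  ultimately obtain t where "g (Suc t) < g t" using exists_descent[of "inv \<pi> a" "inv \<pi> b" g] by auto
  then have lt: "inv \<sigma> (\<pi> (Suc t)) < inv \<sigma> (\<pi> t)" unfolding g_def .
  have pos: "inv \<pi> (\<pi> t) = t" "inv \<pi> (\<pi> (Suc t)) = Suc t" using permutes_inverses(2)[OF p] by auto
  have "\<pi> t \<noteq> \<pi> (Suc t)" using pos by (metis n_not_Suc_n)
  show thesis
  proof (cases "\<pi> t < \<pi> (Suc t)")
    case True
    then show thesis using that[of "\<pi> t" "\<pi> (Suc t)"] lt pos unfolding inversions_def by simp
  next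
    case False
    then have "(\<pi> (Suc t), \<pi> t) \<in> inversions \<pi>"
      using \<open>\<pi> t \<noteq> \<pi> (Suc t)\<close> pos unfolding inversions_def by simp
    then show thesis using sub lt unfolding inversions_def by auto
  qed
qed

lemma Or_perm_mono:
  assumes ih: "interval_hypergraph n I" and le: "weak_le n \<pi> \<sigma>"
  shows "P_le n I (Or_perm I \<pi>) (Or_perm I \<sigma>)"
  using le
proof (induction "card (inversions \<sigma> - inversions \<pi>)" arbitrary: \<pi> rule: less_induct)
  case less
  have p: "\<pi> permutes {1..n}" and s: "\<sigma> permutes {1..n}" and sub: "inversions \<pi> \<subseteq> inversions \<sigma>"
    using less.prems unfolding weak_le_def by auto
  have acp: "acyclic_orientation I (Or_perm I \<pi>)" using Or_perm_acyclic[OF ih p] .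
  show ?case
  proof (cases "inversions \<pi> = inversions \<sigma>")
    case True
    then show ?thesis using Or_perm_eq_if_inversions_eq[OF ih p s] acp unfolding P_le_def by simp
  next
    case False
    then obtain a0 b0 where "(a0, b0) \<in> inversions \<sigma> - inversions \<pi>" using sub by auto
    then obtain a b where ab: "(a, b) \<in> inversions \<sigma> - inversions \<pi>" and adj: "inv \<pi> b = Suc (inv \<pi> a)"
      using exists_adjacent_inversion[OF p s sub] by blast
    have abS: "a \<in> {1..n}" "b \<in> {1..n}" using inversions_subset[OF s] ab by auto
    have "a < b" using ab unfolding inversions_def by simp
    define \<pi>' where "\<pi>' = transpose a b \<circ> \<pi>"
    have p': "\<pi>' permutes {1..n}" unfolding \<pi>'_def using permutes_compose[OF p permutes_swap_id[OF abS]] .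
    have inv': "inversions \<pi>' = insert (a, b) (inversions \<pi>)"
      unfolding \<pi>'_def using inversions_transpose_adjacent[OF p \<open>a < b\<close> adj] .
    have "card (inversions \<sigma> - inversions \<pi>') < card (inversions \<sigma> - inversions \<pi>)"
      unfolding inv' using ab finite_inversions[OF s] by (metis Diff_insert card_Diff1_less finite_Diff)
    moreover have "weak_le n \<pi>' \<sigma>" using p' s sub ab inv' unfolding weak_le_def by auto
    ultimately have IH: "P_le n I (Or_perm I \<pi>') (Or_perm I \<sigma>)" using less.hyps by blast
    have "(Or_perm I \<pi>, Or_perm I \<pi>') \<in> (flip_rel n I)\<^sup>*"
      using Or_perm_transpose_adjacent_flip[OF ih p abS \<open>a < b\<close> adj] acp Or_perm_acyclic[OF ih p']
      unfolding \<pi>'_def flip_rel_def by auto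
    then show ?thesis using IH acp unfolding P_le_def by (meson rtrancl_trans)
  qed
qed

section \<open>Closure under initial subintervals gives a meet morphism\<close>

lemma exists_perm_of_strict_linear_order:
  fixes n :: nat
  assumes r: "strict_linear_order_on {1..n} r"
  obtains \<pi> where "\<pi> permutes {1..n}" "\<forall>u\<in>{1..n}. \<forall>v\<in>{1..n}. inv \<pi> u < inv \<pi> v \<longleftrightarrow> (u, v) \<in> r"
proof -
  let ?S = "{1..n}"
  have tr: "trans r" and irr: "(v, v) \<notin> r" and tot: "total_on ?S r" for v
    using r unfolding strict_linear_order_on_def irrefl_def by auto
  define q where "q v = (if v \<in> ?S then Suc (card {u\<in>?S. (u, v) \<in> r}) else v)" for v
  have mono: "q u < q v" if "u \<in> ?S" "v \<in> ?S" "(u, v) \<in> r" for u v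
  proof -
    have "{w\<in>?S. (w, u) \<in> r} \<subset> {w\<in>?S. (w, v) \<in> r}"
      using that tr irr unfolding trans_def by blast
    then show ?thesis using that psubset_card_mono[of "{w\<in>?S. (w, v) \<in> r}"] unfolding q_def by simp
  qed
  have iff: "q u < q v \<longleftrightarrow> (u, v) \<in> r" if "u \<in> ?S" "v \<in> ?S" for u v
  proof
    assume "q u < q v"
    then have "u \<noteq> v" "(v, u) \<notin> r" using mono[OF that(2,1)] by auto
    then show "(u, v) \<in> r" using tot that unfolding total_on_def by blast
  qed (rule mono[OF that])
  have inj: "inj_on q ?S"
  proof (rule inj_onI, rule ccontr)
    fix u v assume uv: "u \<in> ?S" "v \<in> ?S" "q u = q v" "u \<noteq> v"
    then have "(u, v) \<in> r \<or> (v, u) \<in> r" using tot unfolding total_on_def by blast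
    then show False using iff[OF uv(1,2)] iff[OF uv(2,1)] uv(3) by auto
  qed
  have "q ` ?S \<subseteq> ?S"
  proof clarify
    fix v assume v: "v \<in> ?S"
    have "card {u\<in>?S. (u, v) \<in> r} \<le> card (?S - {v})" using irr by (intro card_mono) auto
    also have "\<dots> = n - 1" using v by simp
    finally have "card {u\<in>?S. (u, v) \<in> r} \<le> n - 1" .
    then show "q v \<in> ?S" using v unfolding q_def by auto
  qed
  then have "bij_betw q ?S ?S" using inj endo_inj_surj[of ?S q] unfolding bij_betw_def by simp
  then have qp: "q permutes ?S" by (rule bij_imp_permutes) (auto simp: q_def)
  show thesis
  proof
    show "inv q permutes ?S" using permutes_inv[OF qp] .
    show "\<forall>u\<in>?S. \<forall>v\<in>?S. inv (inv q) u < inv (inv q) v \<longleftrightarrow> (u, v) \<in> r"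
      using permutes_inv_inv[OF qp] iff by simp
  qed
qed

definition darcs :: "nat set set \<Rightarrow> (nat set \<Rightarrow> nat) \<Rightarrow> (nat \<times> nat) set" where
  "darcs I X = {(c, x) \<in> arcs I X. x < c}"

lemma darcs_subset_arcs: "darcs I X \<subseteq> arcs I X"
  unfolding darcs_def by blast

lemma darcs_convex:
  assumes ih: "interval_hypergraph n I" and X: "orientation I X"
    and yz: "(y, z) \<in> darcs I X" and "z \<le> a" "a < y"
  shows "(y, a) \<in> darcs I X"
proof -
  obtain H where H: "H \<in> I" "X H = y" "z \<in> H" using yz unfolding darcs_def arcs_def by blast
  have "y \<in> H" using X H unfolding orientation_def by blast
  then have "a \<in> H" using interval_hypergraph_edge_convex[OF ih H(1,3)] assms(4,5) by simp
  then show ?thesis using H \<open>a < y\<close> unfolding darcs_def arcs_def by auto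
qed

lemma trancl_darcs_convex:
  assumes ih: "interval_hypergraph n I" and X: "orientation I X"
    and bc: "(b, c) \<in> (darcs I X)\<^sup>+" and "c < a" "a < b"
  shows "(b, a) \<in> (darcs I X)\<^sup>+"
  using bc \<open>c < a\<close>
proof (induction rule: trancl_induct)
  case (base y)
  then show ?case using darcs_convex[OF ih X base(1) _ \<open>a < b\<close>] by auto
next
  case (step y z)
  consider "y < a" | "y = a" | "a < y" by linarith
  then show ?case
  proof cases
    case 3
    then have "(y, a) \<in> darcs I X" using darcs_convex[OF ih X step(2)] step(4) by simp
    with step(1) show ?thesis by (rule trancl_into_trancl)
  qed (use step in auto)
qed

definition descent_order :: "nat set set \<Rightarrow> (nat set \<Rightarrow> nat) \<Rightarrow> (nat \<times> nat) set" where
  "descent_order I X =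
     {(u, v). (u < v \<and> (v, u) \<notin> (darcs I X)\<^sup>+) \<or> (v < u \<and> (u, v) \<in> (darcs I X)\<^sup>+)}"

lemma strict_linear_order_descent_order:
  assumes ih: "interval_hypergraph n I" and X: "orientation I X"
  shows "strict_linear_order_on A (descent_order I X)"
proof -
  let ?D = "(darcs I X)\<^sup>+"
  have mem: "(x, y) \<in> descent_order I X \<longleftrightarrow> (x < y \<and> (y, x) \<notin> ?D) \<or> (y < x \<and> (x, y) \<in> ?D)" for x y
    unfolding descent_order_def by simp
  have convex: "(b, a) \<in> ?D" if "(b, c) \<in> ?D" "c < a" "a < b" for a b c
    using trancl_darcs_convex[OF ih X that] .
  have "trans (descent_order I X)"
  proof (rule transI)
    fix u v w assume uv: "(u, v) \<in> descent_order I X" and vw: "(v, w) \<in> descent_order I X"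
    have "u \<noteq> v" "v \<noteq> w" "u \<noteq> w" using uv vw unfolding mem by auto
    then consider "u < v" "v < w" | "u < w" "w < v" | "v < u" "u < w" | "v < w" "w < u"
      | "w < u" "u < v" | "w < v" "v < u"
      by (auto simp: nat_neq_iff)
    then show "(u, w) \<in> descent_order I X"
    proof cases
      case 1
      then have "(v, u) \<notin> ?D" "(w, v) \<notin> ?D" using uv vw unfolding mem by simp_all
      then show ?thesis using 1 convex[of w u v] unfolding mem by auto
    next
      case 2
      then have "(v, u) \<notin> ?D" "(v, w) \<in> ?D" using uv vw unfolding mem by simp_all
      then show ?thesis using 2 trancl_trans[of v w "darcs I X" u] unfolding mem by auto
    next
      case 3
      then have "(u, v) \<in> ?D" "(w, v) \<notin> ?D" using uv vw unfolding mem by simp_all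
      then show ?thesis using 3 trancl_trans[of w u "darcs I X" v] unfolding mem by auto
    next
      case 4
      then have "(u, v) \<in> ?D" using uv unfolding mem by simp
      then show ?thesis using 4 convex[of u v w] unfolding mem by auto
    next
      case 5
      then have "(v, u) \<notin> ?D" "(v, w) \<in> ?D" using uv vw unfolding mem by simp_all
      then show ?thesis using 5 convex[of v w u] by simp
    next
      case 6
      then have "(u, v) \<in> ?D" "(v, w) \<in> ?D" using uv vw unfolding mem by simp_all
      then show ?thesis using 6 trancl_trans[of u v "darcs I X" w] unfolding mem by auto
    qed
  qed
  moreover have "irrefl (descent_order I X)" unfolding irrefl_def mem by simp
  moreover have "total_on A (descent_order I X)" unfolding total_on_def mem by (auto simp: nat_neq_iff)
  ultimately show ?thesis unfolding strict_linear_order_on_def by blast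
qed

lemma arcs_subset_descent_order:
  assumes "acyclic_orientation I X"
  shows "arcs I X \<subseteq> descent_order I X"
proof clarify
  fix c x assume cx: "(c, x) \<in> arcs I X"
  have "(x, c) \<notin> (darcs I X)\<^sup>+"
  proof
    assume "(x, c) \<in> (darcs I X)\<^sup>+"
    then have "(x, c) \<in> (arcs I X)\<^sup>+" using trancl_mono darcs_subset_arcs by blast
    then have "(c, c) \<in> (arcs I X)\<^sup>+" using cx by (meson trancl_into_trancl2)
    then show False using assms unfolding acyclic_orientation_iff_acyclic_arcs acyclic_def by blast
  qed
  moreover have "x \<noteq> c" using cx unfolding arcs_def by blast
  moreover have "(c, x) \<in> darcs I X" if "x < c" using cx that unfolding darcs_def by blast
  ultimately show "(c, x) \<in> descent_order I X" unfolding descent_order_def by (auto simp: nat_neq_iff)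
qed

lemma arcs_subset:
  assumes "interval_hypergraph n I" "orientation I X"
  shows "arcs I X \<subseteq> {1..n} \<times> {1..n}"
  using assms interval_hypergraph_edge_subset unfolding arcs_def orientation_def by fastforce

lemma exists_min_representative:
  assumes ih: "interval_hypergraph n I" and ac: "acyclic_orientation I X"
  obtains \<mu> where "\<mu> permutes {1..n}" "Or_perm I \<mu> = X"
    "\<And>a b. (a, b) \<in> inversions \<mu> \<Longrightarrow> (b, a) \<in> (darcs I X)\<^sup>+"
proof -
  have X: "orientation I X" using ac unfolding acyclic_orientation_def by blast
  obtain \<mu> where p: "\<mu> permutes {1..n}"
    and ord: "\<forall>u\<in>{1..n}. \<forall>v\<in>{1..n}. inv \<mu> u < inv \<mu> v \<longleftrightarrow> (u, v) \<in> descent_order I X"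
    using exists_perm_of_strict_linear_order[OF strict_linear_order_descent_order[OF ih X]] by blast
  have "Or_perm I \<mu> = X"
    using Or_perm_eq_if_extends_arcs[OF ih p X] ord arcs_subset_descent_order[OF ac] arcs_subset[OF ih X]
    by blast
  moreover have "(b, a) \<in> (darcs I X)\<^sup>+" if ab: "(a, b) \<in> inversions \<mu>" for a b
  proof -
    have "a < b" "inv \<mu> b < inv \<mu> a" using ab unfolding inversions_def by auto
    moreover have "a \<in> {1..n}" "b \<in> {1..n}" using inversions_subset[OF p] ab by auto
    ultimately show ?thesis using ord unfolding descent_order_def by auto
  qed
  ultimately show thesis using that p by blast
qed

lemma arcs_asym:
  assumes "acyclic_orientation I X" "(c, x) \<in> arcs I X" "(x, c) \<in> arcs I X"
  shows False
proof -
  have "(c, c) \<in> (arcs I X)\<^sup>+" using assms(2,3) by (meson trancl.r_into_trancl trancl_into_trancl)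
  then show False using assms(1) unfolding acyclic_orientation_iff_acyclic_arcs acyclic_def by blast
qed

lemma darcs_mono_flip:
  assumes ih: "interval_hypergraph n I" and ci: "closed_initial n I"
    and acX: "acyclic_orientation I X" and oY: "orientation I Y" and fl: "increasing_flip n I X Y"
  shows "darcs I X \<subseteq> darcs I Y"
proof clarify
  fix c x assume "(c, x) \<in> darcs I X"
  then obtain H where H: "H \<in> I" "X H = c" "x \<in> H" "x < c" unfolding darcs_def arcs_def by blast
  obtain i j where ij: "i < j"
    and flH: "\<And>H. H \<in> I \<Longrightarrow> (X H \<noteq> Y H \<longrightarrow> X H = i \<and> Y H = j) \<and> ({i, j} \<subseteq> H \<longrightarrow> (X H = i \<longleftrightarrow> Y H = j))"
    using fl unfolding increasing_flip_def by blast
  have oX: "orientation I X" using acX unfolding acyclic_orientation_def by blast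
  show "(c, x) \<in> darcs I Y"
  proof (cases "Y H = X H")
    case True
    then show ?thesis using H arcsI[of H I x Y] unfolding darcs_def by auto
  next
    case False
    then have c: "c = i" and YH: "Y H = j" using flH[OF H(1)] H(2) by auto
    obtain l r where lr: "H = {l..r}" using interval_hypergraph_edge[OF ih H(1)] by blast
    have "j \<in> H" using oY H(1) YH unfolding orientation_def by blast
    then have "l < i" "i < r" "1 \<le> l" "r \<le> n"
      using lr H(3,4) c ij interval_hypergraph_edge_subset[OF ih H(1)] by auto
    then have G: "{l..i} \<in> I" using ci H(1) lr unfolding closed_initial_def by blast
    have XG: "X {l..i} = i"
    proof (rule ccontr)
      assume ne: "X {l..i} \<noteq> i"
      have "X {l..i} \<in> {l..i}" using oX G unfolding orientation_def by blast
      then have "(X H, X {l..i}) \<in> arcs I X" "(X {l..i}, X H) \<in> arcs I X"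
        using arcsI[OF H(1), of "X {l..i}" X] arcsI[OF G, of i X] ne H(2) c lr \<open>l < i\<close> \<open>i < r\<close> by auto
      then show False using arcs_asym[OF acX] by blast
    qed
    moreover have "Y {l..i} \<in> {l..i}" using oY G unfolding orientation_def by blast
    ultimately have "Y {l..i} = i" using flH[OF G] ij by auto
    moreover have "x \<in> {l..i}" using H(3,4) lr c by auto
    ultimately show ?thesis using G H(4) c arcsI[OF G, of x Y] unfolding darcs_def by auto
  qed
qed

lemma darcs_mono_P_le:
  assumes ih: "interval_hypergraph n I" and ci: "closed_initial n I" and le: "P_le n I X Y"
  shows "darcs I X \<subseteq> darcs I Y"
proof -
  have "(X, Y) \<in> (flip_rel n I)\<^sup>*" using le unfolding P_le_def by blast
  then show ?thesis
  proof (induction rule: rtrancl_induct)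
    case (step Y Z)
    then have "darcs I Y \<subseteq> darcs I Z"
      using darcs_mono_flip[OF ih ci] unfolding flip_rel_def acyclic_orientation_def by blast
    then show ?case using step.IH by blast
  qed simp
qed

lemma exists_least_perm_above:
  assumes ih: "interval_hypergraph n I" and ci: "closed_initial n I" and acX: "acyclic_orientation I X"
  obtains \<mu> where "\<mu> permutes {1..n}" "Or_perm I \<mu> = X"
    "\<And>\<pi>. \<pi> permutes {1..n} \<Longrightarrow> P_le n I X (Or_perm I \<pi>) \<Longrightarrow> weak_le n \<mu> \<pi>"
proof -
  obtain \<mu> where \<mu>: "\<mu> permutes {1..n}" "Or_perm I \<mu> = X"
    and inv\<mu>: "\<And>u v. (u, v) \<in> inversions \<mu> \<Longrightarrow> (v, u) \<in> (darcs I X)\<^sup>+"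
    using exists_min_representative[OF ih acX] by blast
  have "weak_le n \<mu> \<pi>" if p: "\<pi> permutes {1..n}" and X\<pi>: "P_le n I X (Or_perm I \<pi>)" for \<pi>
  proof -
    have "(darcs I X)\<^sup>+ \<subseteq> (arcs I (Or_perm I \<pi>))\<^sup>+"
      using darcs_mono_P_le[OF ih ci X\<pi>] darcs_subset_arcs by (blast intro: trancl_mono)
    then have "inv \<pi> v < inv \<pi> u" if "(u, v) \<in> inversions \<mu>" for u v
      using inv\<mu>[OF that] trancl_arcs_Or_perm[OF ih p] by blast
    then have "inversions \<mu> \<subseteq> inversions \<pi>" unfolding inversions_def by auto
    then show ?thesis using \<mu>(1) p unfolding weak_le_def by blast
  qed
  then show thesis using that \<mu> by blast
qed

lemma meet_morphism_if_closed_initial: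
  assumes ih: "interval_hypergraph n I" and ci: "closed_initial n I"
  shows "meet_morphism {\<pi>. \<pi> permutes {1..n}} (weak_le n)
           {R. acyclic_orientation I R} (P_le n I) (Or_perm I)"
  unfolding meet_morphism_def
proof (intro ballI allI impI)
  fix a b m
  assume "is_meet {\<pi>. \<pi> permutes {1..n}} (weak_le n) a b m"
  then have m: "m permutes {1..n}" and ma: "weak_le n m a" and mb: "weak_le n m b"
    and glb: "\<And>x. x permutes {1..n} \<Longrightarrow> weak_le n x a \<Longrightarrow> weak_le n x b \<Longrightarrow> weak_le n x m"
    unfolding is_meet_def by auto
  have "P_le n I X (Or_perm I m)"
    if acX: "acyclic_orientation I X" and Xa: "P_le n I X (Or_perm I a)" and Xb: "P_le n I X (Or_perm I b)"
    for X
  proof -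
    obtain \<mu> where \<mu>: "\<mu> permutes {1..n}" "Or_perm I \<mu> = X"
      and least: "\<And>\<pi>. \<pi> permutes {1..n} \<Longrightarrow> P_le n I X (Or_perm I \<pi>) \<Longrightarrow> weak_le n \<mu> \<pi>"
      using exists_least_perm_above[OF ih ci acX] by blast
    have "weak_le n \<mu> m" using glb \<mu>(1) least Xa Xb ma mb unfolding weak_le_def by blast
    then show ?thesis using Or_perm_mono[OF ih] \<mu>(2) by metis
  qed
  then show "is_meet {R. acyclic_orientation I R} (P_le n I) (Or_perm I a) (Or_perm I b) (Or_perm I m)"
    unfolding is_meet_def using Or_perm_acyclic[OF ih m] Or_perm_mono[OF ih ma] Or_perm_mono[OF ih mb] by blast
qed

section \<open>A counterexample when initial subintervals are missing\<close>

lemma P_le_imp_le_pointwise: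
  assumes "P_le n I R Q" "H \<in> I"
  shows "R H \<le> Q H"
proof -
  have "(R, Q) \<in> (flip_rel n I)\<^sup>*" using assms(1) unfolding P_le_def by blast
  then show ?thesis
  proof (induction rule: rtrancl_induct)
    case (step Y Z)
    then obtain i j where "i < j" "Y H \<noteq> Z H \<longrightarrow> Y H = i \<and> Z H = j"
      using assms(2) unfolding flip_rel_def increasing_flip_def by blast
    then have "Y H \<le> Z H" by (cases "Y H = Z H") auto
    then show ?case using step.IH by simp
  qed simp
qed

lemma exists_perm_consecutive:
  assumes "i < j" "j < k" "k \<le> n"
  obtains m where "m permutes {1..n}" "inv m i = i" "inv m j = Suc i" "inv m k = Suc (Suc i)"
    "\<And>w. w < i \<Longrightarrow> inv m w = w" "\<And>w. i < w \<Longrightarrow> w \<noteq> j \<Longrightarrow> w \<noteq> k \<Longrightarrow> Suc (Suc i) < inv m w"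
proof
  let ?m = "transpose j (Suc i) \<circ> transpose k (Suc (Suc i))"
  have "1 \<le> j" "1 \<le> Suc i" using assms by auto
  then show "?m permutes {1..n}"
    using assms by (intro permutes_compose permutes_swap_id) auto
  have inv: "inv ?m = transpose k (Suc (Suc i)) \<circ> transpose j (Suc i)"
    using o_inv_distrib[OF bij_transpose bij_transpose] by simp
  show "inv ?m i = i" "inv ?m j = Suc i" "inv ?m k = Suc (Suc i)"
    using assms unfolding inv by (auto simp: transpose_def)
  show "inv ?m w = w" if "w < i" for w
    using assms that unfolding inv by (auto simp: transpose_def)
  show "Suc (Suc i) < inv ?m w" if "i < w" "w \<noteq> j" "w \<noteq> k" for w
    using assms that unfolding inv by (auto simp: transpose_def)
qed

lemma shortest_initial_violation:
  assumes "\<not> closed_initial n I"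
  obtains i j k where "1 \<le> i" "i < j" "j < k" "k \<le> n" "{i..k} \<in> I" "{i..j} \<notin> I"
    "\<And>r. j < r \<Longrightarrow> r < k \<Longrightarrow> {i..r} \<notin> I"
proof -
  define V where "V k \<longleftrightarrow> (\<exists>i j. 1 \<le> i \<and> i < j \<and> j < k \<and> k \<le> n \<and> {i..k} \<in> I \<and> {i..j} \<notin> I)" for k
  have "\<exists>k. V k" using assms unfolding closed_initial_def V_def by blast
  then obtain k where "V k" and kmin: "\<And>k'. V k' \<Longrightarrow> k \<le> k'"
    using ex_has_least_nat[of V _ id] by auto
  then obtain i j where ijk: "1 \<le> i" "i < j" "j < k" "k \<le> n" "{i..k} \<in> I" "{i..j} \<notin> I"
    unfolding V_def by blast
  have "{i..r} \<notin> I" if "j < r" "r < k" for r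
    using kmin[of r] ijk that unfolding V_def by force
  then show thesis using that ijk by blast
qed

lemma Or_perm_transpose_adjacent_eq:
  assumes ih: "interval_hypergraph n I" and p: "\<pi> permutes {1..n}"
    and ab: "a \<in> {1..n}" "b \<in> {1..n}" and adj: "inv \<pi> b = Suc (inv \<pi> a)"
    and no_edge: "\<And>H. H \<in> I \<Longrightarrow> a \<in> H \<Longrightarrow> b \<in> H \<Longrightarrow> Or_perm I \<pi> H \<noteq> a"
  shows "Or_perm I (transpose a b \<circ> \<pi>) = Or_perm I \<pi>"
proof
  fix H
  show "Or_perm I (transpose a b \<circ> \<pi>) H = Or_perm I \<pi> H"
  proof (cases "H \<in> I")
    case True
    then show ?thesis using Or_perm_transpose_adjacent[OF ih p True ab adj] no_edge[OF True] by auto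
  qed (simp add: Or_perm_outside)
qed

lemma exists_meet_configuration:
  assumes ijk: "1 \<le> i" "i < j" "j < k" "k \<le> n"
  obtains m \<sigma> where "m permutes {1..n}" "\<sigma> permutes {1..n}"
    "is_meet {\<pi>. \<pi> permutes {1..n}} (weak_le n) (transpose i j \<circ> m) \<sigma> m"
    "weak_le n (transpose i j \<circ> m) (transpose i j \<circ> \<sigma>)"
    "inv m j = Suc (inv m i)" "is_min_by (inv m) {i..k} i"
    "inv \<sigma> j = Suc (inv \<sigma> i)" "inv \<sigma> k < inv \<sigma> i" "\<And>w. w < i \<Longrightarrow> inv \<sigma> w < inv \<sigma> i"
proof -
  have S: "i \<in> {1..n}" "j \<in> {1..n}" "k \<in> {1..n}" using ijk by auto
  obtain m where m: "m permutes {1..n}" and pos: "inv m i = i" "inv m j = Suc i" "inv m k = Suc (Suc i)"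
    and pos_less: "\<And>w. w < i \<Longrightarrow> inv m w = w"
    and pos_greater: "\<And>w. i < w \<Longrightarrow> w \<noteq> j \<Longrightarrow> w \<noteq> k \<Longrightarrow> Suc (Suc i) < inv m w"
    using exists_perm_consecutive[OF ijk(2-4)] by blast
  define \<pi> where "\<pi> = transpose i j \<circ> m"
  define m' where "m' = transpose j k \<circ> m"
  define \<sigma> where "\<sigma> = transpose i k \<circ> m'"
  have perms: "\<pi> permutes {1..n}" "m' permutes {1..n}" "\<sigma> permutes {1..n}" "transpose i j \<circ> \<sigma> permutes {1..n}"
    unfolding \<sigma>_def \<pi>_def m'_def using m S by (meson permutes_compose permutes_swap_id)+
  have inv_m': "inv m' = inv m \<circ> transpose j k" unfolding m'_def using inv_transpose_comp[OF m] .
  have inv_\<sigma>: "inv \<sigma> = inv m \<circ> transpose j k \<circ> transpose i k"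
    unfolding \<sigma>_def using inv_transpose_comp[OF perms(2)] inv_m' by simp
  have inversions_\<pi>: "inversions \<pi> = insert (i, j) (inversions m)"
    unfolding \<pi>_def using inversions_transpose_adjacent[OF m ijk(2)] pos by simp
  have "inversions m' = insert (j, k) (inversions m)"
    unfolding m'_def using inversions_transpose_adjacent[OF m ijk(3)] pos by simp
  then have inversions_\<sigma>: "inversions \<sigma> = insert (i, k) (insert (j, k) (inversions m))"
    unfolding \<sigma>_def using inversions_transpose_adjacent[OF perms(2)] ijk pos inv_m' by simp
  have inversions_\<rho>: "inversions (transpose i j \<circ> \<sigma>) = insert (i, j) (inversions \<sigma>)"
    using inversions_transpose_adjacent[OF perms(3) ijk(2)] inv_\<sigma> pos ijk by simp
  have "(i, j) \<notin> inversions m" using pos unfolding inversions_def by simp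
  then have "inversions \<pi> \<inter> inversions \<sigma> = inversions m"
    unfolding inversions_\<pi> inversions_\<sigma> using ijk by auto
  then have meet: "is_meet {\<pi>. \<pi> permutes {1..n}} (weak_le n) \<pi> \<sigma> m"
    unfolding is_meet_def weak_le_def using perms m inversions_\<pi> inversions_\<sigma> by auto
  have le: "weak_le n \<pi> (transpose i j \<circ> \<sigma>)"
    unfolding weak_le_def using perms inversions_\<pi> inversions_\<rho> inversions_\<sigma> by auto
  have "inv m i < inv m w" if "w \<in> {i..k}" "w \<noteq> i" for w
    using pos pos_greater[of w] that by (cases "w = j \<or> w = k") auto
  then have min_m: "is_min_by (inv m) {i..k} i" unfolding is_min_by_def using ijk by simp
  have adj_m: "inv m j = Suc (inv m i)" using pos by simp
  have adj_\<sigma>: "inv \<sigma> j = Suc (inv \<sigma> i)" and k_\<sigma>: "inv \<sigma> k < inv \<sigma> i"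
    unfolding inv_\<sigma> using pos ijk by simp_all
  have less_\<sigma>: "inv \<sigma> w < inv \<sigma> i" if "w < i" for w
    unfolding inv_\<sigma> using pos pos_less that ijk by (auto simp: transpose_def)
  show thesis
    using that[OF m perms(3) meet[unfolded \<pi>_def] le[unfolded \<pi>_def] adj_m min_m adj_\<sigma> k_\<sigma> less_\<sigma>] .
qed

lemma closed_initial_if_meet_morphism:
  assumes ih: "interval_hypergraph n I"
    and mm: "meet_morphism {\<pi>. \<pi> permutes {1..n}} (weak_le n)
               {R. acyclic_orientation I R} (P_le n I) (Or_perm I)"
  shows "closed_initial n I"
proof (rule ccontr)
  assume "\<not> closed_initial n I"
  then obtain i j k where ijk: "1 \<le> i" "i < j" "j < k" "k \<le> n" and Hk: "{i..k} \<in> I" and Hj: "{i..j} \<notin> I"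
    and short: "\<And>r. j < r \<Longrightarrow> r < k \<Longrightarrow> {i..r} \<notin> I"
    using shortest_initial_violation by blast
  have S: "i \<in> {1..n}" "j \<in> {1..n}" using ijk by auto
  obtain m \<sigma> where m: "m permutes {1..n}" and \<sigma>: "\<sigma> permutes {1..n}"
    and meet: "is_meet {\<pi>. \<pi> permutes {1..n}} (weak_le n) (transpose i j \<circ> m) \<sigma> m"
    and le: "weak_le n (transpose i j \<circ> m) (transpose i j \<circ> \<sigma>)"
    and adj_m: "inv m j = Suc (inv m i)" and min_m: "is_min_by (inv m) {i..k} i"
    and adj_\<sigma>: "inv \<sigma> j = Suc (inv \<sigma> i)" and k_\<sigma>: "inv \<sigma> k < inv \<sigma> i"
    and less_\<sigma>: "\<And>w. w < i \<Longrightarrow> inv \<sigma> w < inv \<sigma> i"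
    using exists_meet_configuration[OF ijk] by blast
  let ?\<pi> = "transpose i j \<circ> m"
  have p: "?\<pi> permutes {1..n}" using permutes_compose[OF m permutes_swap_id[OF S]] .
  have "Or_perm I (transpose i j \<circ> \<sigma>) = Or_perm I \<sigma>"
  proof (rule Or_perm_transpose_adjacent_eq[OF ih \<sigma> S adj_\<sigma>], rule notI)
    fix H assume H: "H \<in> I" "i \<in> H" "j \<in> H" and "Or_perm I \<sigma> H = i"
    then have min: "is_min_by (inv \<sigma>) H i" using Or_perm_eq_iff[OF ih \<sigma> H(1)] by simp
    obtain l r where lr: "H = {l..r}" using interval_hypergraph_edge[OF ih H(1)] by blast
    have kH: "k \<notin> H" using min k_\<sigma> ijk unfolding is_min_by_def by fastforce
    have lH: "w \<notin> H" if "w < i" for w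
      using min less_\<sigma>[OF that] that unfolding is_min_by_def by (metis less_asym less_not_refl)
    have "l \<le> i" "i \<le> r" "j \<le> r" using H(2,3) lr by auto
    then have "l \<in> H" using lr by simp
    then have "l = i" using lH \<open>l \<le> i\<close> by (meson le_neq_implies_less)
    have "\<not> k \<le> r" using kH lr ijk \<open>l \<le> i\<close> by auto
    then have "r < k" by simp
    then show False using short Hj H(1) lr \<open>l = i\<close> \<open>j \<le> r\<close> by (cases "r = j") auto
  qed
  then have "P_le n I (Or_perm I ?\<pi>) (Or_perm I \<sigma>)" using Or_perm_mono[OF ih le] by simp
  moreover have "P_le n I (Or_perm I ?\<pi>) (Or_perm I ?\<pi>)"
    using Or_perm_acyclic[OF ih p] unfolding P_le_def by simp
  moreover have "is_meet {R. acyclic_orientation I R} (P_le n I) (Or_perm I ?\<pi>) (Or_perm I \<sigma>) (Or_perm I m)"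
    using mm meet \<sigma> p unfolding meet_morphism_def by blast
  ultimately have "P_le n I (Or_perm I ?\<pi>) (Or_perm I m)"
    using Or_perm_acyclic[OF ih p] unfolding is_meet_def by blast
  then have "Or_perm I ?\<pi> {i..k} \<le> Or_perm I m {i..k}" using P_le_imp_le_pointwise Hk by blast
  moreover have "Or_perm I m {i..k} = i" using Or_perm_eq_iff[OF ih m Hk] min_m by blast
  moreover have "Or_perm I ?\<pi> {i..k} = j"
    using Or_perm_transpose_adjacent[OF ih m Hk S adj_m] calculation(2) ijk by simp
  ultimately show False using ijk by simp
qed

section \<open>Reflection of values\<close>

definition reflect :: "nat \<Rightarrow> nat \<Rightarrow> nat" where
  "reflect n v = (if v \<in> {1..n} then Suc n - v else v)"

lemma reflect_reflect [simp]: "reflect n (reflect n v) = v"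
  unfolding reflect_def by auto

lemma reflect_in_iff [simp]: "reflect n v \<in> {1..n} \<longleftrightarrow> v \<in> {1..n}"
  unfolding reflect_def by auto

lemma inj_reflect: "inj (reflect n)"
  by (metis injI reflect_reflect)

lemma reflect_image_reflect_image [simp]: "reflect n ` reflect n ` H = H"
  by (simp add: image_image)

lemma reflect_less_iff: "u \<in> {1..n} \<Longrightarrow> v \<in> {1..n} \<Longrightarrow> reflect n u < reflect n v \<longleftrightarrow> v < u"
  unfolding reflect_def by auto

lemma reflect_permutes: "reflect n permutes {1..n}"
  unfolding permutes_def by (metis reflect_def reflect_reflect)

lemma inv_reflect: "inv (reflect n) = reflect n"
  by (rule inv_unique_comp) (simp_all add: fun_eq_iff)

lemma reflect_image_interval:
  assumes "1 \<le> i" "j \<le> n"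
  shows "reflect n ` {i..j} = {Suc n - j..Suc n - i}"
proof
  show "reflect n ` {i..j} \<subseteq> {Suc n - j..Suc n - i}"
    using assms unfolding reflect_def by auto
  show "{Suc n - j..Suc n - i} \<subseteq> reflect n ` {i..j}"
  proof
    fix x assume x: "x \<in> {Suc n - j..Suc n - i}"
    then have "x = reflect n (Suc n - x)" "Suc n - x \<in> {i..j}" using assms unfolding reflect_def by auto
    then show "x \<in> reflect n ` {i..j}" by blast
  qed
qed

definition reflect_hg :: "nat \<Rightarrow> nat set set \<Rightarrow> nat set set" where
  "reflect_hg n I = (\<lambda>H. reflect n ` H) ` I"

lemma mem_reflect_hg_iff: "H \<in> reflect_hg n I \<longleftrightarrow> reflect n ` H \<in> I"
  unfolding reflect_hg_def by (metis image_eqI imageE reflect_image_reflect_image)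

lemma reflect_hg_reflect_hg [simp]: "reflect_hg n (reflect_hg n I) = I"
  unfolding reflect_hg_def by (simp add: image_image)

lemma interval_hypergraph_reflect_hg:
  assumes ih: "interval_hypergraph n I"
  shows "interval_hypergraph n (reflect_hg n I)"
  unfolding interval_hypergraph_def
proof
  show "reflect_hg n I \<subseteq> {{i..j} |i j. 1 \<le> i \<and> i \<le> j \<and> j \<le> n}"
  proof
    fix H assume "H \<in> reflect_hg n I"
    then obtain G where G: "G \<in> I" "H = reflect n ` G" unfolding reflect_hg_def by blast
    obtain l r where "G = {l..r}" "1 \<le> l" "l \<le> r" "r \<le> n" using interval_hypergraph_edge[OF ih G(1)] .
    then have "H = {Suc n - r..Suc n - l}" "1 \<le> Suc n - r" "Suc n - r \<le> Suc n - l" "Suc n - l \<le> n"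
      using G(2) reflect_image_interval by auto
    then show "H \<in> {{i..j} |i j. 1 \<le> i \<and> i \<le> j \<and> j \<le> n}" by blast
  qed
  show "\<forall>v\<in>{1..n}. {v} \<in> reflect_hg n I"
    using ih reflect_in_iff[of n] unfolding interval_hypergraph_def mem_reflect_hg_iff by auto
qed

lemma closed_final_iff_closed_initial_reflect_hg:
  "closed_final n I \<longleftrightarrow> closed_initial n (reflect_hg n I)"
proof -
  have mem: "{a..b} \<in> reflect_hg n I \<longleftrightarrow> {Suc n - b..Suc n - a} \<in> I" if "1 \<le> a" "b \<le> n" for a b
    unfolding mem_reflect_hg_iff using reflect_image_interval[OF that] by simp
  show ?thesis
  proof
    assume cf: "closed_final n I"
    show "closed_initial n (reflect_hg n I)"
      unfolding closed_initial_def
    proof (intro allI impI)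
      fix i j k assume ijk: "1 \<le> i \<and> i < j \<and> j < k \<and> k \<le> n \<and> {i..k} \<in> reflect_hg n I"
      have b: "1 \<le> Suc n - k" "Suc n - k < Suc n - j" "Suc n - j < Suc n - i" "Suc n - i \<le> n"
        using ijk by auto
      have "{Suc n - k..Suc n - i} \<in> I" using mem[of i k] ijk by simp
      then have "{Suc n - j..Suc n - i} \<in> I" using cf b unfolding closed_final_def by blast
      then show "{i..j} \<in> reflect_hg n I" using mem[of i j] ijk by simp
    qed
  next
    assume ci: "closed_initial n (reflect_hg n I)"
    show "closed_final n I"
      unfolding closed_final_def
    proof (intro allI impI)
      fix i j k assume ijk: "1 \<le> i \<and> i < j \<and> j < k \<and> k \<le> n \<and> {i..k} \<in> I"
      have b: "1 \<le> Suc n - k" "Suc n - k < Suc n - j" "Suc n - j < Suc n - i" "Suc n - i \<le> n"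
        using ijk by auto
      have "{Suc n - k..Suc n - i} \<in> reflect_hg n I" using mem[of "Suc n - k" "Suc n - i"] ijk b by simp
      then have "{Suc n - k..Suc n - j} \<in> reflect_hg n I" using ci b unfolding closed_initial_def by blast
      then show "{j..k} \<in> I" using mem[of "Suc n - k" "Suc n - j"] ijk b by simp
    qed
  qed
qed

definition reflect_orient :: "nat \<Rightarrow> nat set set \<Rightarrow> (nat set \<Rightarrow> nat) \<Rightarrow> nat set \<Rightarrow> nat" where
  "reflect_orient n I R = (\<lambda>H. if H \<in> reflect_hg n I then reflect n (R (reflect n ` H)) else 0)"

lemma orientation_reflect_orient:
  assumes "orientation I R"
  shows "orientation (reflect_hg n I) (reflect_orient n I R)"
proof -
  have "reflect n (R (reflect n ` H)) \<in> H" if "reflect n ` H \<in> I" for H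
  proof -
    have "R (reflect n ` H) \<in> reflect n ` H" using assms that unfolding orientation_def by blast
    then have "reflect n (R (reflect n ` H)) \<in> reflect n ` reflect n ` H" by (rule imageI)
    then show ?thesis by simp
  qed
  then show ?thesis unfolding orientation_def reflect_orient_def by (auto simp: mem_reflect_hg_iff)
qed

lemma reflect_orient_reflect_orient:
  assumes "orientation I R"
  shows "reflect_orient n (reflect_hg n I) (reflect_orient n I R) = R"
proof
  fix H
  show "reflect_orient n (reflect_hg n I) (reflect_orient n I R) H = R H"
    using assms unfolding reflect_orient_def orientation_def mem_reflect_hg_iff by simp
qed

lemma acyclic_orientation_reflect_orient:
  assumes ac: "acyclic_orientation I R"
  shows "acyclic_orientation (reflect_hg n I) (reflect_orient n I R)"
  unfolding acyclic_orientation_def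
proof (intro conjI notI)
  show "orientation (reflect_hg n I) (reflect_orient n I R)"
    using ac orientation_reflect_orient unfolding acyclic_orientation_def by blast
  let ?R' = "reflect_orient n I R"
  assume "\<exists>(k::nat) hs. 2 \<le> k \<and> (\<forall>i<k. hs i \<in> reflect_hg n I) \<and>
            (\<forall>i<k. ?R' (hs ((i + 1) mod k)) \<in> hs i - {?R' (hs i)})"
  then obtain k :: nat and hs where k: "2 \<le> k" and hs: "\<forall>i<k. hs i \<in> reflect_hg n I"
    and cyc: "\<forall>i<k. ?R' (hs ((i + 1) mod k)) \<in> hs i - {?R' (hs i)}" by blast
  define hs' where "hs' i = reflect n ` hs i" for i
  have hs': "\<forall>i<k. hs' i \<in> I" using hs unfolding hs'_def mem_reflect_hg_iff by blast
  have R': "?R' (hs i) = reflect n (R (hs' i))" if "i < k" for i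
    using hs that unfolding reflect_orient_def hs'_def by simp
  have "R (hs' ((i + 1) mod k)) \<in> hs' i - {R (hs' i)}" if i: "i < k" for i
  proof -
    have "(i + 1) mod k < k" using k by simp
    then have "reflect n (R (hs' ((i + 1) mod k))) \<in> hs i - {reflect n (R (hs' i))}"
      using cyc R' i by simp
    then have "R (hs' ((i + 1) mod k)) \<in> reflect n ` hs i" "R (hs' ((i + 1) mod k)) \<noteq> R (hs' i)"
      by (auto intro: image_eqI[where f = "reflect n", OF reflect_reflect[symmetric]])
    then show ?thesis unfolding hs'_def by simp
  qed
  then show False using ac k hs' unfolding acyclic_orientation_def by blast
qed

lemma increasing_flip_reflect_orient:
  assumes oR: "orientation I R" and oQ: "orientation I Q" and fl: "increasing_flip n I R Q"
  shows "increasing_flip n (reflect_hg n I) (reflect_orient n I Q) (reflect_orient n I R)"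
proof -
  obtain i j where ij: "1 \<le> i" "i < j" "j \<le> n"
    and flH: "\<And>H. H \<in> I \<Longrightarrow> (R H \<noteq> Q H \<longrightarrow> R H = i \<and> Q H = j) \<and> ({i, j} \<subseteq> H \<longrightarrow> (R H = i \<longleftrightarrow> Q H = j))"
    using fl unfolding increasing_flip_def by blast
  have "reflect_orient n I Q \<noteq> reflect_orient n I R"
  proof
    assume eq: "reflect_orient n I Q = reflect_orient n I R"
    have "Q = reflect_orient n (reflect_hg n I) (reflect_orient n I Q)"
      using reflect_orient_reflect_orient[OF oQ] by simp
    also have "\<dots> = R" unfolding eq using reflect_orient_reflect_orient[OF oR] .
    finally have "Q = R" .
    then show False using fl unfolding increasing_flip_def by blast
  qed
  moreover have "reflect n j < reflect n i" "1 \<le> reflect n j" "reflect n i \<le> n"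
    using ij reflect_less_iff[of i n j] unfolding reflect_def by auto
  moreover have "\<forall>H\<in>reflect_hg n I.
      (reflect_orient n I Q H \<noteq> reflect_orient n I R H \<longrightarrow>
        reflect_orient n I Q H = reflect n j \<and> reflect_orient n I R H = reflect n i) \<and>
      ({reflect n j, reflect n i} \<subseteq> H \<longrightarrow>
        (reflect_orient n I Q H = reflect n j \<longleftrightarrow> reflect_orient n I R H = reflect n i))"
    (is "\<forall>H\<in>_. ?flip H")
  proof
    fix H assume H: "H \<in> reflect_hg n I"
    have G: "reflect n ` H \<in> I" using H unfolding mem_reflect_hg_iff .
    have "{reflect n j, reflect n i} \<subseteq> H \<longleftrightarrow> {i, j} \<subseteq> reflect n ` H"
      by (auto intro: image_eqI[where f = "reflect n", OF reflect_reflect[symmetric]])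
    moreover have "reflect n x = reflect n y \<longleftrightarrow> x = y" for x y using inj_reflect[of n] by (simp add: inj_eq)
    moreover have "reflect_orient n I Q H = reflect n (Q (reflect n ` H))"
      "reflect_orient n I R H = reflect n (R (reflect n ` H))"
      using H unfolding reflect_orient_def by simp_all
    ultimately show "?flip H"
      using flH[OF G] by simp
  qed
  ultimately show ?thesis unfolding increasing_flip_def by blast
qed

lemma P_le_reflect_orient:
  assumes "P_le n I R Q"
  shows "P_le n (reflect_hg n I) (reflect_orient n I Q) (reflect_orient n I R)"
proof -
  have "(R, Q) \<in> (flip_rel n I)\<^sup>*" using assms unfolding P_le_def by blast
  then have "(reflect_orient n I Q, reflect_orient n I R) \<in> (flip_rel n (reflect_hg n I))\<^sup>*"
  proof (induction rule: rtrancl_induct)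
    case (step Y Z)
    then have acY: "acyclic_orientation I Y" and acZ: "acyclic_orientation I Z"
      and fl: "increasing_flip n I Y Z" unfolding flip_rel_def by auto
    have "increasing_flip n (reflect_hg n I) (reflect_orient n I Z) (reflect_orient n I Y)"
      using increasing_flip_reflect_orient[OF _ _ fl] acY acZ
      unfolding acyclic_orientation_iff_acyclic_arcs by blast
    then have "(reflect_orient n I Z, reflect_orient n I Y) \<in> flip_rel n (reflect_hg n I)"
      using acyclic_orientation_reflect_orient[OF acY] acyclic_orientation_reflect_orient[OF acZ]
      unfolding flip_rel_def by blast
    then show ?case using step.IH by (rule converse_rtrancl_into_rtrancl)
  qed simp
  then show ?thesis using assms acyclic_orientation_reflect_orient unfolding P_le_def by blast
qed

lemma is_min_by_comp:
  assumes "inj_on f H"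
  shows "is_min_by (p \<circ> f) H v \<longleftrightarrow> v \<in> H \<and> is_min_by p (f ` H) (f v)"
  using assms unfolding is_min_by_def inj_on_def by auto

lemma inv_reflect_comp: "\<pi> permutes {1..n} \<Longrightarrow> inv (reflect n \<circ> \<pi>) = inv \<pi> \<circ> reflect n"
  using o_inv_distrib[OF permutes_bij[OF reflect_permutes] permutes_bij] inv_reflect by simp

lemma Or_perm_reflect:
  assumes ih: "interval_hypergraph n I" and p: "\<pi> permutes {1..n}"
  shows "Or_perm (reflect_hg n I) (reflect n \<circ> \<pi>) = reflect_orient n I (Or_perm I \<pi>)"
proof
  fix H
  show "Or_perm (reflect_hg n I) (reflect n \<circ> \<pi>) H = reflect_orient n I (Or_perm I \<pi>) H"
  proof (cases "H \<in> reflect_hg n I")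
    case True
    then have G: "reflect n ` H \<in> I" unfolding mem_reflect_hg_iff .
    have p': "reflect n \<circ> \<pi> permutes {1..n}" using permutes_compose[OF p reflect_permutes] .
    have "is_min_by (inv \<pi>) (reflect n ` H) (Or_perm I \<pi> (reflect n ` H))"
      using Or_perm_is_min_by[OF ih p G] .
    moreover from this have "reflect n (Or_perm I \<pi> (reflect n ` H)) \<in> H"
      unfolding is_min_by_def by (metis imageI reflect_image_reflect_image)
    ultimately have "is_min_by (inv (reflect n \<circ> \<pi>)) H (reflect n (Or_perm I \<pi> (reflect n ` H)))"
      using is_min_by_comp[OF inj_on_subset[OF inj_reflect subset_UNIV]] inv_reflect_comp[OF p] by simp
    then show ?thesis
      using Or_perm_eq_iff[OF interval_hypergraph_reflect_hg[OF ih] p' True] True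
      unfolding reflect_orient_def by simp
  qed (simp add: Or_perm_outside reflect_orient_def)
qed

lemma inversions_reflect_comp:
  assumes p: "\<pi> permutes {1..n}"
  shows "inversions (reflect n \<circ> \<pi>)
           = {(a, b). a \<in> {1..n} \<and> b \<in> {1..n} \<and> a < b \<and> (reflect n b, reflect n a) \<notin> inversions \<pi>}"
proof -
  have p': "reflect n \<circ> \<pi> permutes {1..n}" using permutes_compose[OF p reflect_permutes] .
  have "(a, b) \<in> inversions (reflect n \<circ> \<pi>) \<longleftrightarrow> (reflect n b, reflect n a) \<notin> inversions \<pi>"
    if "a \<in> {1..n}" "b \<in> {1..n}" "a < b" for a b
  proof -
    have "reflect n b < reflect n a" using reflect_less_iff that by blast
    moreover have "inv \<pi> (reflect n a) \<noteq> inv \<pi> (reflect n b)"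
      using that permutes_inj[OF permutes_inv[OF p]] inj_reflect[of n] by (metis inj_eq less_irrefl)
    ultimately show ?thesis using that inv_reflect_comp[OF p] unfolding inversions_def by auto
  qed
  moreover have "a \<in> {1..n} \<and> b \<in> {1..n} \<and> a < b" if "(a, b) \<in> inversions (reflect n \<circ> \<pi>)" for a b
    using that inversions_subset[OF p'] unfolding inversions_def by blast
  ultimately show ?thesis by fast
qed

lemma weak_le_reflect_comp:
  assumes "weak_le n \<pi> \<sigma>"
  shows "weak_le n (reflect n \<circ> \<sigma>) (reflect n \<circ> \<pi>)"
  using assms permutes_compose[OF _ reflect_permutes] inversions_reflect_comp
  unfolding weak_le_def by auto

lemma reflect_comp_reflect_comp [simp]: "reflect n \<circ> (reflect n \<circ> \<pi>) = \<pi>"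
  by (simp add: fun_eq_iff)

lemma meet_morphism_transfer:
  assumes f: "f ` A = A'" and f_le: "\<And>x y. x \<in> A \<Longrightarrow> y \<in> A \<Longrightarrow> le' (f x) (f y) \<longleftrightarrow> le x y"
    and g: "g ` B = B'" and g_le: "\<And>x y. x \<in> B \<Longrightarrow> y \<in> B \<Longrightarrow> leB' (g x) (g y) \<longleftrightarrow> leB x y"
    and \<phi>: "\<And>x. x \<in> A \<Longrightarrow> \<phi> x \<in> B" and \<phi>': "\<And>x. x \<in> A \<Longrightarrow> \<phi>' (f x) = g (\<phi> x)"
    and mm: "meet_morphism A le B leB \<phi>"
  shows "meet_morphism A' le' B' leB' \<phi>'"
  unfolding meet_morphism_def
proof (intro ballI allI impI)
  fix a' b' m' assume "a' \<in> A'" "b' \<in> A'" and meet': "is_meet A' le' a' b' m'"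
  then obtain a b m where abm: "a \<in> A" "b \<in> A" "m \<in> A" "a' = f a" "b' = f b" "m' = f m"
    using f unfolding is_meet_def by blast
  have "le x m" if "x \<in> A" "le x a" "le x b" for x
  proof -
    have "f x \<in> A'" using f that(1) by blast
    then have "le' (f x) m'" using meet' that abm f_le unfolding is_meet_def by simp
    then show ?thesis using abm that(1) f_le by simp
  qed
  then have "is_meet A le a b m"
    using meet' abm f f_le unfolding is_meet_def by auto
  then have "is_meet B leB (\<phi> a) (\<phi> b) (\<phi> m)" using mm abm unfolding meet_morphism_def by blast
  then have "is_meet B' leB' (g (\<phi> a)) (g (\<phi> b)) (g (\<phi> m))"
    using abm g g_le \<phi> unfolding is_meet_def by auto
  then show "is_meet B' leB' (\<phi>' a') (\<phi>' b') (\<phi>' m')" using abm \<phi>' by simp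
qed

lemma join_morphism_iff_meet_morphism_converse:
  "join_morphism A le B leB \<phi> \<longleftrightarrow> meet_morphism A (\<lambda>x y. le y x) B (\<lambda>x y. leB y x) \<phi>"
  unfolding join_morphism_def meet_morphism_def is_join_def is_meet_def ..

lemma reflect_comp_image_perms: "(\<lambda>\<pi>. reflect n \<circ> \<pi>) ` {\<pi>. \<pi> permutes {1..n}} = {\<pi>. \<pi> permutes {1..n}}"
proof
  show "(\<lambda>\<pi>. reflect n \<circ> \<pi>) ` {\<pi>. \<pi> permutes {1..n}} \<subseteq> {\<pi>. \<pi> permutes {1..n}}"
    using permutes_compose[OF _ reflect_permutes] by blast
  show "{\<pi>. \<pi> permutes {1..n}} \<subseteq> (\<lambda>\<pi>. reflect n \<circ> \<pi>) ` {\<pi>. \<pi> permutes {1..n}}"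
    using permutes_compose[OF _ reflect_permutes] reflect_comp_reflect_comp by (metis image_eqI mem_Collect_eq subsetI)
qed

lemma weak_le_reflect_comp_iff:
  "\<pi> permutes {1..n} \<Longrightarrow> \<sigma> permutes {1..n} \<Longrightarrow>
     weak_le n (reflect n \<circ> \<pi>) (reflect n \<circ> \<sigma>) \<longleftrightarrow> weak_le n \<sigma> \<pi>"
  using weak_le_reflect_comp[of n "reflect n \<circ> \<pi>" "reflect n \<circ> \<sigma>"] weak_le_reflect_comp[of n \<sigma> \<pi>]
  by auto

lemma reflect_orient_image_acyclic:
  "reflect_orient n I ` {R. acyclic_orientation I R} = {R. acyclic_orientation (reflect_hg n I) R}"
proof
  show "reflect_orient n I ` {R. acyclic_orientation I R} \<subseteq> {R. acyclic_orientation (reflect_hg n I) R}"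
    using acyclic_orientation_reflect_orient by blast
  show "{R. acyclic_orientation (reflect_hg n I) R} \<subseteq> reflect_orient n I ` {R. acyclic_orientation I R}"
  proof
    fix R assume "R \<in> {R. acyclic_orientation (reflect_hg n I) R}"
    then have ac: "acyclic_orientation (reflect_hg n I) R" by simp
    then have "acyclic_orientation I (reflect_orient n (reflect_hg n I) R)"
      using acyclic_orientation_reflect_orient[where n = n, OF ac] by simp
    moreover have "reflect_orient n I (reflect_orient n (reflect_hg n I) R) = R"
      using reflect_orient_reflect_orient[of "reflect_hg n I" R n] ac
      unfolding acyclic_orientation_iff_acyclic_arcs by simp
    ultimately show "R \<in> reflect_orient n I ` {R. acyclic_orientation I R}" by (metis image_eqI mem_Collect_eq)
  qed
qed

lemma P_le_reflect_orient_iff: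
  assumes "acyclic_orientation I R" "acyclic_orientation I Q"
  shows "P_le n (reflect_hg n I) (reflect_orient n I R) (reflect_orient n I Q) \<longleftrightarrow> P_le n I Q R"
proof
  assume "P_le n (reflect_hg n I) (reflect_orient n I R) (reflect_orient n I Q)"
  from P_le_reflect_orient[OF this] show "P_le n I Q R"
    using assms reflect_orient_reflect_orient unfolding acyclic_orientation_iff_acyclic_arcs by simp
qed (rule P_le_reflect_orient)

lemma join_morphism_iff_meet_morphism_reflect_hg:
  assumes ih: "interval_hypergraph n I"
  shows "join_morphism {\<pi>. \<pi> permutes {1..n}} (weak_le n) {R. acyclic_orientation I R} (P_le n I) (Or_perm I)
     \<longleftrightarrow> meet_morphism {\<pi>. \<pi> permutes {1..n}} (weak_le n)
           {R. acyclic_orientation (reflect_hg n I) R} (P_le n (reflect_hg n I)) (Or_perm (reflect_hg n I))"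
  (is "?join \<longleftrightarrow> ?meet")
proof
  assume ?join
  then have "meet_morphism {\<pi>. \<pi> permutes {1..n}} (\<lambda>x y. weak_le n y x)
      {R. acyclic_orientation I R} (\<lambda>x y. P_le n I y x) (Or_perm I)"
    unfolding join_morphism_iff_meet_morphism_converse .
  from meet_morphism_transfer[OF reflect_comp_image_perms _ reflect_orient_image_acyclic _ _ _ this]
  show ?meet
    using weak_le_reflect_comp_iff P_le_reflect_orient_iff Or_perm_acyclic[OF ih] Or_perm_reflect[OF ih]
    by simp
next
  have ih': "interval_hypergraph n (reflect_hg n I)" using interval_hypergraph_reflect_hg[OF ih] .
  assume ?meet
  from meet_morphism_transfer[where le' = "\<lambda>x y. weak_le n y x" and leB' = "\<lambda>x y. P_le n I y x"
      and \<phi>' = "Or_perm I", OF reflect_comp_image_perms _ reflect_orient_image_acyclic[of n "reflect_hg n I"] _ _ _ this]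
  have "meet_morphism {\<pi>. \<pi> permutes {1..n}} (\<lambda>x y. weak_le n y x)
      {R. acyclic_orientation I R} (\<lambda>x y. P_le n I y x) (Or_perm I)"
    using weak_le_reflect_comp_iff P_le_reflect_orient_iff[of "reflect_hg n I" _ _ n, simplified]
      Or_perm_acyclic[OF ih'] Or_perm_reflect[OF ih']
    by simp
  then show ?join unfolding join_morphism_iff_meet_morphism_converse .
qed

lemma meet_morphism_iff_closed_initial:
  assumes "interval_hypergraph n I"
  shows "meet_morphism {\<pi>. \<pi> permutes {1..n}} (weak_le n)
           {R. acyclic_orientation I R} (P_le n I) (Or_perm I) \<longleftrightarrow> closed_initial n I"
  using meet_morphism_if_closed_initial[OF assms] closed_initial_if_meet_morphism[OF assms] by blast

theorem theoremD:
  fixes n :: nat and I :: "nat set set"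
  assumes "n \<ge> 1" and "interval_hypergraph n I"
  shows "(meet_morphism {\<pi>. \<pi> permutes {1..n}} (weak_le n)
            {Rr. acyclic_orientation I Rr} (P_le n I) (Or_perm I)
          \<longleftrightarrow> closed_initial n I)
       \<and> (join_morphism {\<pi>. \<pi> permutes {1..n}} (weak_le n)
            {Rr. acyclic_orientation I Rr} (P_le n I) (Or_perm I)
          \<longleftrightarrow> closed_final n I)"
  using meet_morphism_iff_closed_initial[OF assms(2)]
    meet_morphism_iff_closed_initial[OF interval_hypergraph_reflect_hg[OF assms(2)]]
    join_morphism_iff_meet_morphism_reflect_hg[OF assms(2)]
    closed_final_iff_closed_initial_reflect_hg[of n I]
  by blast

end
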